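(* Let $\Omega=\{y\in\mathbb{R}^n: a_i^Ty\le b_i,\ i=1,\ldots,m\}$. There exists a constant $C>0$ depending only on $a_1,\ldots,a_m$ such that the following holds: for every $x\in\Omega$ and $\alpha>0$ for which the nearly-active index set $I(x,\alpha)$ has $q\le n$ elements and $\{a_i:i\in I(x,\alpha)\}$ are linearly independent, the set $\mathcal{D}$ constructed below is a $\Lambda$-positive spanning set for $B(x,\alpha)\cap\Omega$ with $\Lambda\le nC$. Construction: label the nearly-active constraints so that $I(x,\alpha)=\{1,\ldots,q\}$, let $A=[a_1\ \cdots\ a_q]\in\mathbb{R}^{n\times q}$, let $u_1,\ldots,u_n$ be an orthonormal set of left singular vectors of $A$ with $u_1,\ldots,u_q$ spanning $\operatorname{col}(A)$; for $i=1,\ldots,q$ let $\hat d_i:=-(A^\dagger)^Te_i$, $d_i:=\frac{\alpha}{\|\hat d_i\|}\hat d_i$, and let $\alpha_i$ be the largest value in $[0,1]$ with $x-\alpha_id_i\in\Omega$; and set $\mathcal{D}=\{d_1,\ldots,d_q\}\cup\{-\alpha_1d_1,\ldots,-\alpha_qd_q\}\cup\{\pm\alpha u_{q+1},\ldots,\pm\alpha u_n\}$.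
   Context: Nearly-active constraints: $I(x,\alpha):=\{i\in\{1,\ldots,m\}: b_i-\alpha\|a_i\|\le a_i^Tx\}$ (constraints whose boundary hyperplane is within distance $\alpha$ of $x$). $A^\dagger=(A^TA)^{-1}A^T$ is the Moore–Penrose pseudoinverse, $e_i\in\mathbb{R}^q$ the coordinate vectors, $B(y,r)=\{z:\|z-y\|\le r\}$. Given $x\in\Omega$, $\alpha>0$, $\Lambda\ge0$, a set $\{d_1,\ldots,d_p\}$ is a $\Lambda$-positive spanning set for $B(x,\alpha)\cap\Omega$ if $x+d_i\in\Omega$ for all $i$ and, for every $v\in\mathbb{R}^n$ with $x+v\in\Omega$ and $\|v\|\le\alpha$, there exists $c\in\mathbb{R}^p$ with $c\ge0$, $v=\sum_ic_id_i$ and $\|c\|_1\le\Lambda$. *)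

theory Defs
  imports "HOL-Analysis.Analysis"
begin

text \<open>Constraints are indexed by i < m (the paper's 1..m); vectors live in real^'n, n = CARD('n).\<close>

definition Omega :: "(nat \<Rightarrow> real^'n) \<Rightarrow> (nat \<Rightarrow> real) \<Rightarrow> nat \<Rightarrow> (real^'n) set" where
  "Omega a b m = {y. \<forall>i<m. a i \<bullet> y \<le> b i}"

definition nearly_active :: "(nat \<Rightarrow> real^'n) \<Rightarrow> (nat \<Rightarrow> real) \<Rightarrow> nat \<Rightarrow> real^'n \<Rightarrow> real \<Rightarrow> nat set" where
  "nearly_active a b m x \<alpha> = {i. i < m \<and> b i - \<alpha> * norm (a i) \<le> a i \<bullet> x}"

definition pos_spanning_set :: "(real^'n) set \<Rightarrow> real^'n \<Rightarrow> real \<Rightarrow> (real^'n) set \<Rightarrow> real \<Rightarrow> bool" where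
  "pos_spanning_set \<Omega> x \<alpha> D \<Lambda> \<longleftrightarrow>
     finite D \<and> (\<forall>d\<in>D. x + d \<in> \<Omega>) \<and>
     (\<forall>v. x + v \<in> \<Omega> \<and> norm v \<le> \<alpha> \<longrightarrow>
        (\<exists>c. (\<forall>d\<in>D. c d \<ge> 0) \<and> v = (\<Sum>d\<in>D. c d *\<^sub>R d) \<and> (\<Sum>d\<in>D. c d) \<le> \<Lambda>))"

text \<open>With A the matrix whose columns are a_j (j in I), this is the inverse of the
  Gram matrix A^T A, with rows/columns indexed by I (zero outside I).\<close>
definition gram_inv :: "(nat \<Rightarrow> real^'n) \<Rightarrow> nat set \<Rightarrow> nat \<Rightarrow> nat \<Rightarrow> real" where
  "gram_inv a I = (THE M. (\<forall>j\<in>I. \<forall>k\<in>I. (\<Sum>l\<in>I. (a j \<bullet> a l) * M l k) = (if j = k then 1 else 0))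
                         \<and> (\<forall>j k. j \<notin> I \<or> k \<notin> I \<longrightarrow> M j k = 0))"

text \<open>(A^dagger)^T e_i = A (A^T A)^{-1} e_i, with A^dagger = (A^T A)^{-1} A^T.\<close>
definition pinvT_col :: "(nat \<Rightarrow> real^'n) \<Rightarrow> nat set \<Rightarrow> nat \<Rightarrow> real^'n" where
  "pinvT_col a I i = (\<Sum>j\<in>I. gram_inv a I j i *\<^sub>R a j)"

definition dhat :: "(nat \<Rightarrow> real^'n) \<Rightarrow> nat set \<Rightarrow> nat \<Rightarrow> real^'n" where
  "dhat a I i = - pinvT_col a I i"

definition dir :: "(nat \<Rightarrow> real^'n) \<Rightarrow> nat set \<Rightarrow> real \<Rightarrow> nat \<Rightarrow> real^'n" where
  "dir a I \<alpha> i = (\<alpha> / norm (dhat a I i)) *\<^sub>R dhat a I i"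

definition step_len :: "(real^'n) set \<Rightarrow> real^'n \<Rightarrow> real^'n \<Rightarrow> real" where
  "step_len \<Omega> x d = (GREATEST t. 0 \<le> t \<and> t \<le> 1 \<and> x - t *\<^sub>R d \<in> \<Omega>)"

text \<open>u 0, ..., u (n-1) (the paper's u_1..u_n) form an orthonormal set of left singular
  vectors of A (eigenvectors of A A^T, where A A^T v = sum over j in I of (a_j . v) a_j),
  and the first q = card I of them span col(A).\<close>
definition left_singular_basis :: "(nat \<Rightarrow> real^'n) \<Rightarrow> nat set \<Rightarrow> (nat \<Rightarrow> real^'n) \<Rightarrow> bool" where
  "left_singular_basis a I u \<longleftrightarrow>
     (\<forall>i<CARD('n). \<forall>j<CARD('n). u i \<bullet> u j = (if i = j then 1 else 0)) \<and>
     (\<forall>i<CARD('n). \<exists>\<sigma>. (\<Sum>j\<in>I. (a j \<bullet> u i) *\<^sub>R a j) = \<sigma> *\<^sub>R u i) \<and>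
     span (u ` {..<card I}) = span (a ` I)"

definition Dset :: "(nat \<Rightarrow> real^'n) \<Rightarrow> (nat \<Rightarrow> real) \<Rightarrow> nat \<Rightarrow> real^'n \<Rightarrow> real \<Rightarrow> (nat \<Rightarrow> real^'n) \<Rightarrow> (real^'n) set" where
  "Dset a b m x \<alpha> u =
     (let I = nearly_active a b m x \<alpha>; q = card I in
        (\<lambda>i. dir a I \<alpha> i) ` I
      \<union> (\<lambda>i. - (step_len (Omega a b m) x (dir a I \<alpha> i) *\<^sub>R dir a I \<alpha> i)) ` I
      \<union> (\<lambda>i. \<alpha> *\<^sub>R u i) ` {q..<CARD('n)}
      \<union> (\<lambda>i. - (\<alpha> *\<^sub>R u i)) ` {q..<CARD('n)})"

end

theory Submission
  imports Defs
begin

text \<open>For i, j in I the vectors dhat_i satisfy a_j . dhat_i = -delta_ij, so every v splits as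
  v = sum_(i in I) (-(a_i . v)) dhat_i + sum_(k >= q) (u_k . v) u_k.
  Let ||v|| <= alpha. A term with a_i . v <= 0 is a nonnegative multiple of d_i with coefficient at
  most ||a_i|| ||dhat_i||. If a_i . v > 0, feasibility of x + v bounds a_i . v by the slack
  b_i - a_i . x, and this makes the term a multiple of -alpha_i d_i with coefficient at most
  max 1 (||a_i|| ||dhat_i||). The remaining terms are multiples of +-alpha u_k with coefficient at
  most 1. Since dhat_i is determined by the a_j and the index set I, maximising ||a_i|| ||dhat_i||
  over all subsets of the m constraints gives a constant C >= 1 depending only on the a_j, and the
  coefficients sum to at most q C + (n - q) <= n C.\<close>

lemma sum_image_coeffs_exist:
  fixes a :: "'i \<Rightarrow> 'a::real_vector"
  assumes "finite I" "inj_on a I" "y \<in> span (a ` I)"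
  obtains c where "y = (\<Sum>j\<in>I. c j *\<^sub>R a j)"
proof -
  obtain c where "y = (\<Sum>w\<in>a ` I. c w *\<^sub>R w)"
    using assms(1,3) span_finite[of "a ` I"] by auto
  also have "\<dots> = (\<Sum>j\<in>I. c (a j) *\<^sub>R a j)"
    using sum.reindex[OF assms(2)] by (simp add: comp_def)
  finally show thesis by (rule that)
qed

lemma independent_image_sum_eq_0:
  fixes a :: "'i \<Rightarrow> 'a::real_vector"
  assumes "finite I" "inj_on a I" "independent (a ` I)"
    and "(\<Sum>j\<in>I. c j *\<^sub>R a j) = 0" "j \<in> I"
  shows "c j = 0"
proof -
  let ?c = "\<lambda>w. c (inv_into I a w)"
  have "(\<Sum>w\<in>a ` I. ?c w *\<^sub>R w) = (\<Sum>j\<in>I. c j *\<^sub>R a j)"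
    using assms(2) by (simp add: sum.reindex inv_into_f_f cong: sum.cong)
  then have "?c (a j) = 0"
    using assms(4,5) by (intro independentD[OF assms(3) finite_imageI[OF assms(1)] subset_refl]) auto
  then show ?thesis using assms(2,5) by (simp add: inv_into_f_f)
qed

lemma orthonormal_family_expand:
  fixes u :: "nat \<Rightarrow> 'a::euclidean_space"
  assumes orthonormal: "\<And>i j. i < DIM('a) \<Longrightarrow> j < DIM('a) \<Longrightarrow> u i \<bullet> u j = (if i = j then 1 else 0)"
  shows "v = (\<Sum>k<DIM('a). (u k \<bullet> v) *\<^sub>R u k)"
proof -
  let ?U = "u ` {..<DIM('a)}"
  have inj: "inj_on u {..<DIM('a)}"
  proof (rule inj_onI)
    fix i j assume "i \<in> {..<DIM('a)}" "j \<in> {..<DIM('a)}" "u i = u j"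
    then show "i = j" using orthonormal[of i i] orthonormal[of i j] by (auto split: if_splits)
  qed
  have orthogonal: "pairwise orthogonal ?U"
    unfolding pairwise_def orthogonal_def using orthonormal by auto
  have "independent ?U"
    by (rule pairwise_orthogonal_independent[OF orthogonal]) (use orthonormal in force)
  moreover have "card ?U = DIM('a)"
    using card_image[OF inj] by simp
  ultimately have "v \<in> span ?U"
    using card_ge_dim_independent[of ?U UNIV] by auto
  moreover have "norm w = 1" if "w \<in> ?U" for w
    using that orthonormal by (auto simp: norm_eq_1)
  ultimately have "v = (\<Sum>w\<in>?U. (v \<bullet> w) *\<^sub>R w)"
    using orthonormal_basis_expand[OF orthogonal] by simp
  then show ?thesis
    by (simp add: sum.reindex[OF inj] inner_commute)
qed

lemma dual_vector_exists:
  fixes a :: "'i \<Rightarrow> 'a::euclidean_space"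
  assumes "inj_on a I" "independent (a ` I)" "k \<in> I"
  obtains e where "e \<in> span (a ` I)" "\<And>j. j \<in> I \<Longrightarrow> a j \<bullet> e = (if j = k then 1 else 0)"
proof -
  \<comment> \<open>e is the component of a k orthogonal to the other a j, rescaled\<close>
  let ?S = "a ` (I - {k})"
  obtain y z where y: "y \<in> span ?S" and z: "\<And>w. w \<in> span ?S \<Longrightarrow> orthogonal z w"
    and ak: "a k = y + z"
    using orthogonal_subspace_decomp_exists[of ?S "a k"] by blast
  have "a k \<notin> span ?S"
  proof
    assume "a k \<in> span ?S"
    moreover have "?S = a ` I - {a k}" using assms(1,3) by (auto simp: inj_on_def)
    ultimately have "dependent (a ` I)" unfolding dependent_def using assms(3) by auto
    then show False using assms(2) by simp
  qed
  then have "z \<noteq> 0" using ak y by auto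
  have span_S: "span ?S \<subseteq> span (a ` I)" by (rule span_mono) auto
  define e where "e = (1 / (z \<bullet> z)) *\<^sub>R z"
  show thesis
  proof
    have "z = a k - y" using ak by simp
    moreover have "a k \<in> span (a ` I)" using assms(3) by (simp add: span_base)
    ultimately have "z \<in> span (a ` I)" using y span_S by (auto intro: span_diff)
    then show "e \<in> span (a ` I)" unfolding e_def by (rule span_scale)
  next
    fix j assume j: "j \<in> I"
    show "a j \<bullet> e = (if j = k then 1 else 0)"
    proof (cases "j = k")
      case True
      have "y \<bullet> z = 0" using z[OF y] by (simp add: orthogonal_def inner_commute)
      then show ?thesis using True ak \<open>z \<noteq> 0\<close> by (simp add: e_def inner_add_left)
    next
      case False
      then have "orthogonal z (a j)" using j z by (simp add: span_base)
      then show ?thesis using False by (simp add: e_def orthogonal_def inner_commute)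
    qed
  qed
qed

definition is_gram_inv :: "(nat \<Rightarrow> real^'n) \<Rightarrow> nat set \<Rightarrow> (nat \<Rightarrow> nat \<Rightarrow> real) \<Rightarrow> bool" where
  "is_gram_inv a I M \<longleftrightarrow>
     (\<forall>j\<in>I. \<forall>k\<in>I. (\<Sum>l\<in>I. (a j \<bullet> a l) * M l k) = (if j = k then 1 else 0))
     \<and> (\<forall>j k. j \<notin> I \<or> k \<notin> I \<longrightarrow> M j k = 0)"

lemma is_gram_inv_exists:
  fixes a :: "nat \<Rightarrow> real^'n"
  assumes "finite I" "inj_on a I" "independent (a ` I)"
  shows "\<exists>M. is_gram_inv a I M"
proof -
  have "\<exists>c. \<forall>j\<in>I. a j \<bullet> (\<Sum>l\<in>I. c l *\<^sub>R a l) = (if j = k then 1 else 0)" if "k \<in> I" for k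
  proof -
    obtain e where e: "e \<in> span (a ` I)" "\<And>j. j \<in> I \<Longrightarrow> a j \<bullet> e = (if j = k then 1 else 0)"
      using dual_vector_exists[OF assms(2,3) \<open>k \<in> I\<close>] by blast
    obtain c where "e = (\<Sum>l\<in>I. c l *\<^sub>R a l)"
      using sum_image_coeffs_exist[OF assms(1,2) e(1)] by blast
    then show ?thesis using e(2) by blast
  qed
  then obtain c where c: "\<And>j k. k \<in> I \<Longrightarrow> j \<in> I \<Longrightarrow> a j \<bullet> (\<Sum>l\<in>I. c k l *\<^sub>R a l) = (if j = k then 1 else 0)"
    by metis
  have "is_gram_inv a I (\<lambda>l k. if l \<in> I \<and> k \<in> I then c k l else 0)"
    unfolding is_gram_inv_def using c by (simp add: inner_sum_right mult.commute)
  then show ?thesis by blast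
qed

lemma is_gram_inv_unique:
  fixes a :: "nat \<Rightarrow> real^'n"
  assumes "finite I" "inj_on a I" "independent (a ` I)" "is_gram_inv a I M" "is_gram_inv a I M'"
  shows "M = M'"
proof (intro ext)
  fix l k
  show "M l k = M' l k"
  proof (cases "l \<in> I \<and> k \<in> I")
    case False
    then show ?thesis using assms(4,5) unfolding is_gram_inv_def by force
  next
    case True
    let ?col = "\<lambda>M. \<Sum>l\<in>I. M l k *\<^sub>R a l"
    have "?col M = ?col M'"
    proof (rule vector_eq_dot_span)
      show "?col M \<in> span (a ` I)" "?col M' \<in> span (a ` I)"
        by (intro span_sum span_scale span_base imageI; assumption)+
      show "w \<bullet> ?col M = w \<bullet> ?col M'" if "w \<in> a ` I" for w
        using that True assms(4,5) unfolding is_gram_inv_def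
        by (auto simp: inner_sum_right mult.commute)
    qed
    then have "(\<Sum>l\<in>I. (M l k - M' l k) *\<^sub>R a l) = 0"
      by (simp add: scaleR_diff_left sum_subtractf)
    then show ?thesis
      using independent_image_sum_eq_0[OF assms(1-3)] True by fastforce
  qed
qed

lemma is_gram_inv_gram_inv:
  fixes a :: "nat \<Rightarrow> real^'n"
  assumes "finite I" "inj_on a I" "independent (a ` I)"
  shows "is_gram_inv a I (gram_inv a I)"
proof -
  have "\<exists>!M. is_gram_inv a I M"
    using is_gram_inv_exists[OF assms] is_gram_inv_unique[OF assms] by blast
  then show ?thesis unfolding gram_inv_def is_gram_inv_def[symmetric] by (rule theI')
qed

lemma inner_dhat:
  fixes a :: "nat \<Rightarrow> real^'n"
  assumes "finite I" "inj_on a I" "independent (a ` I)" "i \<in> I" "j \<in> I"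
  shows "a j \<bullet> dhat a I i = (if j = i then -1 else 0)"
proof -
  have "a j \<bullet> dhat a I i = - (\<Sum>l\<in>I. (a j \<bullet> a l) * gram_inv a I l i)"
    by (simp add: dhat_def pinvT_col_def inner_sum_right mult.commute)
  then show ?thesis
    using is_gram_inv_gram_inv[OF assms(1-3)] assms(4,5) unfolding is_gram_inv_def by simp
qed

lemma dhat_in_span: "dhat a I i \<in> span (a ` I)"
  unfolding dhat_def pinvT_col_def by (intro span_neg span_sum span_scale span_base imageI)

lemma dhat_neq_0:
  fixes a :: "nat \<Rightarrow> real^'n"
  assumes "finite I" "inj_on a I" "independent (a ` I)" "i \<in> I"
  shows "dhat a I i \<noteq> 0"
  using inner_dhat[OF assms assms(4)] by auto

lemma span_eq_dhat_sum:
  fixes a :: "nat \<Rightarrow> real^'n"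
  assumes "finite I" "inj_on a I" "independent (a ` I)" "w \<in> span (a ` I)"
  shows "w = (\<Sum>i\<in>I. (- (a i \<bullet> w)) *\<^sub>R dhat a I i)"
proof (rule vector_eq_dot_span[OF assms(4)])
  show "(\<Sum>i\<in>I. (- (a i \<bullet> w)) *\<^sub>R dhat a I i) \<in> span (a ` I)"
    by (intro span_sum span_scale dhat_in_span)
  show "s \<bullet> w = s \<bullet> (\<Sum>i\<in>I. (- (a i \<bullet> w)) *\<^sub>R dhat a I i)" if "s \<in> a ` I" for s
  proof -
    obtain j where j: "j \<in> I" "s = a j" using \<open>s \<in> a ` I\<close> by blast
    have "s \<bullet> (\<Sum>i\<in>I. (- (a i \<bullet> w)) *\<^sub>R dhat a I i) = (\<Sum>i\<in>I. if j = i then a i \<bullet> w else 0)"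
      using inner_dhat[OF assms(1-3) _ j(1)] j(2) by (auto simp: inner_sum_right intro: sum.cong)
    also have "\<dots> = s \<bullet> w" using j assms(1) by simp
    finally show ?thesis by simp
  qed
qed

definition bounded_nonneg_comb :: "'a::real_vector set \<Rightarrow> real \<Rightarrow> 'a \<Rightarrow> bool" where
  "bounded_nonneg_comb D L v \<longleftrightarrow>
     (\<exists>c. (\<forall>d\<in>D. c d \<ge> 0) \<and> v = (\<Sum>d\<in>D. c d *\<^sub>R d) \<and> (\<Sum>d\<in>D. c d) \<le> L)"

lemma bounded_nonneg_comb_scaleR:
  assumes "finite D" "d \<in> D" "0 \<le> t" "t \<le> L"
  shows "bounded_nonneg_comb D L (t *\<^sub>R d)"
  unfolding bounded_nonneg_comb_def
  by (rule exI[where x="\<lambda>e. if e = d then t else 0"])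
     (use assms in \<open>simp add: if_distrib[of "\<lambda>x. x *\<^sub>R _"] sum.delta' cong: if_cong\<close>)

lemma bounded_nonneg_comb_add:
  assumes "bounded_nonneg_comb D L v" "bounded_nonneg_comb D L' w"
  shows "bounded_nonneg_comb D (L + L') (v + w)"
proof -
  obtain c c' where "\<forall>d\<in>D. 0 \<le> c d" "v = (\<Sum>d\<in>D. c d *\<^sub>R d)" "sum c D \<le> L"
    "\<forall>d\<in>D. 0 \<le> c' d" "w = (\<Sum>d\<in>D. c' d *\<^sub>R d)" "sum c' D \<le> L'"
    using assms unfolding bounded_nonneg_comb_def by blast
  then show ?thesis
    unfolding bounded_nonneg_comb_def
    by (intro exI[where x="\<lambda>d. c d + c' d"]) (simp add: sum.distrib scaleR_add_left)
qed

lemma bounded_nonneg_comb_sum: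
  assumes "finite K" "\<And>k. k \<in> K \<Longrightarrow> bounded_nonneg_comb D (L k) (f k)"
  shows "bounded_nonneg_comb D (sum L K) (sum f K)"
  using assms
proof (induction K rule: finite_induct)
  case empty
  show ?case unfolding bounded_nonneg_comb_def by (rule exI[where x="\<lambda>_. 0"]) simp
next
  case (insert k K)
  then show ?case by (simp add: bounded_nonneg_comb_add)
qed

lemma bounded_nonneg_comb_mono:
  "bounded_nonneg_comb D L v \<Longrightarrow> L \<le> L' \<Longrightarrow> bounded_nonneg_comb D L' v"
  unfolding bounded_nonneg_comb_def by force

lemma pos_spanning_setI:
  assumes "finite D" "\<And>d. d \<in> D \<Longrightarrow> x + d \<in> \<Omega>"
    and "\<And>v. x + v \<in> \<Omega> \<Longrightarrow> norm v \<le> \<alpha> \<Longrightarrow> bounded_nonneg_comb D \<Lambda> v"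
  shows "pos_spanning_set \<Omega> x \<alpha> D \<Lambda>"
  using assms unfolding pos_spanning_set_def bounded_nonneg_comb_def by blast

lemma nearly_active_subset: "nearly_active a b m x \<alpha> \<subseteq> {..<m}"
  unfolding nearly_active_def by auto

lemma add_in_Omega_if_nearly_active:
  assumes "norm e \<le> \<alpha>" "\<And>j. j \<in> nearly_active a b m x \<alpha> \<Longrightarrow> a j \<bullet> (x + e) \<le> b j"
  shows "x + e \<in> Omega a b m"
  unfolding Omega_def
proof (intro CollectI allI impI)
  fix j assume "j < m"
  show "a j \<bullet> (x + e) \<le> b j"
  proof (cases "j \<in> nearly_active a b m x \<alpha>")
    case True
    then show ?thesis by (rule assms(2))
  next
    case False
    have "a j \<bullet> e \<le> norm (a j) * \<alpha>"
      using norm_cauchy_schwarz[of "a j" e] assms(1) mult_left_mono[OF assms(1), of "norm (a j)"]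
      by simp
    then show ?thesis
      using False \<open>j < m\<close> unfolding nearly_active_def by (simp add: inner_add_right algebra_simps)
  qed
qed

locale spanning_construction =
  fixes a :: "nat \<Rightarrow> real^'n" and b :: "nat \<Rightarrow> real" and m :: nat
    and x :: "real^'n" and \<alpha> :: real and u :: "nat \<Rightarrow> real^'n"
  assumes x_in_Omega: "x \<in> Omega a b m"
    and alpha_pos: "\<alpha> > 0"
    and card_le: "card (nearly_active a b m x \<alpha>) \<le> CARD('n)"
    and inj: "inj_on a (nearly_active a b m x \<alpha>)"
    and independent: "independent (a ` nearly_active a b m x \<alpha>)"
    and singular_basis: "left_singular_basis a (nearly_active a b m x \<alpha>) u"
begin

abbreviation "I \<equiv> nearly_active a b m x \<alpha>"
abbreviation "q \<equiv> card I"
abbreviation "\<Omega> \<equiv> Omega a b m"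
abbreviation "D \<equiv> Dset a b m x \<alpha> u"
abbreviation "slack i \<equiv> b i - a i \<bullet> x"
\<comment> \<open>the paper's alpha_i, by step_len_dir\<close>
abbreviation "back_step i \<equiv> min 1 (slack i * norm (dhat a I i) / \<alpha>)"

lemma finite_I: "finite I"
  by (rule finite_subset[OF nearly_active_subset]) simp

lemma in_Omega_le: "y \<in> \<Omega> \<Longrightarrow> i \<in> I \<Longrightarrow> a i \<bullet> y \<le> b i"
  unfolding Omega_def nearly_active_def by simp

lemma slack_nonneg: "i \<in> I \<Longrightarrow> 0 \<le> slack i"
  using in_Omega_le[OF x_in_Omega] by simp

lemma norm_dhat_pos: "i \<in> I \<Longrightarrow> norm (dhat a I i) > 0"
  using dhat_neq_0[OF finite_I inj independent] by simp

lemma inner_dir: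
  assumes "i \<in> I" "j \<in> I"
  shows "a j \<bullet> dir a I \<alpha> i = (if j = i then - \<alpha> / norm (dhat a I i) else 0)"
  using inner_dhat[OF finite_I inj independent assms] unfolding dir_def by simp

lemma norm_dir: "i \<in> I \<Longrightarrow> norm (dir a I \<alpha> i) = \<alpha>"
  using norm_dhat_pos alpha_pos unfolding dir_def by simp

lemma add_scaled_dir_in_Omega:
  assumes i: "i \<in> I" and "\<bar>t\<bar> \<le> 1" and slack: "- t * \<alpha> / norm (dhat a I i) \<le> slack i"
  shows "x + t *\<^sub>R dir a I \<alpha> i \<in> \<Omega>"
proof (rule add_in_Omega_if_nearly_active)
  show "norm (t *\<^sub>R dir a I \<alpha> i) \<le> \<alpha>"
    using norm_dir[OF i] alpha_pos \<open>\<bar>t\<bar> \<le> 1\<close> by (simp add: mult_left_le_one_le)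
  show "a j \<bullet> (x + t *\<^sub>R dir a I \<alpha> i) \<le> b j" if j: "j \<in> I" for j
    using inner_dir[OF i j] slack slack_nonneg[OF j] by (auto simp: inner_add_right)
qed

lemma sub_step_dir_in_Omega:
  assumes i: "i \<in> I"
  shows "x - back_step i *\<^sub>R dir a I \<alpha> i \<in> \<Omega>"
proof -
  have "back_step i * \<alpha> / norm (dhat a I i) \<le> slack i"
    using alpha_pos norm_dhat_pos[OF i] by (simp add: min_def field_simps)
  then have "x + (- back_step i) *\<^sub>R dir a I \<alpha> i \<in> \<Omega>"
    using slack_nonneg[OF i] norm_dhat_pos[OF i] alpha_pos by (intro add_scaled_dir_in_Omega[OF i]) auto
  then show ?thesis by simp
qed

lemma step_len_dir:
  assumes i: "i \<in> I"
  shows "step_len \<Omega> x (dir a I \<alpha> i) = back_step i"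
  unfolding step_len_def
proof (rule Greatest_equality)
  show "0 \<le> back_step i \<and> back_step i \<le> 1 \<and> x - back_step i *\<^sub>R dir a I \<alpha> i \<in> \<Omega>"
    using sub_step_dir_in_Omega[OF i] slack_nonneg[OF i] alpha_pos by simp
next
  fix t assume t: "0 \<le> t \<and> t \<le> 1 \<and> x - t *\<^sub>R dir a I \<alpha> i \<in> \<Omega>"
  then have "a i \<bullet> (x - t *\<^sub>R dir a I \<alpha> i) \<le> b i"
    using in_Omega_le[OF _ i] by blast
  then have "t * \<alpha> / norm (dhat a I i) \<le> slack i"
    using inner_dir[OF i i] by (simp add: inner_diff_right)
  then have "t \<le> slack i * norm (dhat a I i) / \<alpha>"
    using alpha_pos norm_dhat_pos[OF i] by (simp add: field_simps)
  then show "t \<le> back_step i" using t by simp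
qed

lemma orthonormal_u: "k < CARD('n) \<Longrightarrow> j < CARD('n) \<Longrightarrow> u k \<bullet> u j = (if k = j then 1 else 0)"
  using singular_basis unfolding left_singular_basis_def by blast

lemma norm_u: "k < CARD('n) \<Longrightarrow> norm (u k) = 1"
  using orthonormal_u[of k k] by (simp add: norm_eq_1)

lemma span_u: "span (u ` {..<q}) = span (a ` I)"
  using singular_basis unfolding left_singular_basis_def by blast

lemma inner_a_u:
  assumes "j \<in> I" "q \<le> k" "k < CARD('n)"
  shows "a j \<bullet> u k = 0"
proof -
  have "a j \<in> span (u ` {..<q})" using span_u assms(1) by (simp add: span_base)
  moreover have "orthogonal (u k) w" if "w \<in> u ` {..<q}" for w
    using that orthonormal_u[of k] assms(2,3) card_le unfolding orthogonal_def by force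
  ultimately have "orthogonal (u k) (a j)" by (rule orthogonal_to_span)
  then show ?thesis by (simp add: orthogonal_def inner_commute)
qed

lemma Dset_eq:
  "D = dir a I \<alpha> ` I
     \<union> (\<lambda>i. - (back_step i *\<^sub>R dir a I \<alpha> i)) ` I
     \<union> (\<lambda>k. \<alpha> *\<^sub>R u k) ` {q..<CARD('n)} \<union> (\<lambda>k. - (\<alpha> *\<^sub>R u k)) ` {q..<CARD('n)}"
  unfolding Dset_def Let_def using step_len_dir by (auto simp: image_iff)

lemma finite_Dset: "finite D"
  unfolding Dset_eq using finite_I by simp

lemma dir_in_Dset: "i \<in> I \<Longrightarrow> dir a I \<alpha> i \<in> D"
  unfolding Dset_eq by blast

lemma back_dir_in_Dset:
  "i \<in> I \<Longrightarrow> - (back_step i *\<^sub>R dir a I \<alpha> i) \<in> D"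
  unfolding Dset_eq by blast

lemma u_in_Dset:
  assumes "k \<in> {q..<CARD('n)}"
  shows "\<alpha> *\<^sub>R u k \<in> D" "- (\<alpha> *\<^sub>R u k) \<in> D"
  unfolding Dset_eq using assms by blast+

lemma Dset_feasible:
  assumes "e \<in> D"
  shows "x + e \<in> \<Omega>"
  using assms unfolding Dset_eq
proof (elim UnE imageE)
  fix i assume i: "i \<in> I" and "e = dir a I \<alpha> i"
  moreover have "0 \<le> \<alpha> / norm (dhat a I i)"
    using alpha_pos by simp
  ultimately show ?thesis
    using add_scaled_dir_in_Omega[OF i, of 1] slack_nonneg[OF i] by simp
next
  fix i assume i: "i \<in> I" and e: "e = - (back_step i *\<^sub>R dir a I \<alpha> i)"
  show ?thesis using sub_step_dir_in_Omega[OF i] e by simp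
next
  fix k assume "k \<in> {q..<CARD('n)}" and "e = \<alpha> *\<^sub>R u k"
  then show ?thesis
    using norm_u inner_a_u alpha_pos
    by (intro add_in_Omega_if_nearly_active) (auto simp: inner_add_right in_Omega_le[OF x_in_Omega])
next
  fix k assume "k \<in> {q..<CARD('n)}" and "e = - (\<alpha> *\<^sub>R u k)"
  then show ?thesis
    using norm_u inner_a_u alpha_pos
    by (intro add_in_Omega_if_nearly_active) (auto simp: inner_diff_right in_Omega_le[OF x_in_Omega])
qed

lemma dhat_u_decomposition:
  "v = (\<Sum>i\<in>I. (- (a i \<bullet> v)) *\<^sub>R dhat a I i) + (\<Sum>k\<in>{q..<CARD('n)}. (u k \<bullet> v) *\<^sub>R u k)"
proof -
  define w where "w = (\<Sum>k<q. (u k \<bullet> v) *\<^sub>R u k)"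
  define z where "z = (\<Sum>k\<in>{q..<CARD('n)}. (u k \<bullet> v) *\<^sub>R u k)"
  have dim: "DIM(real^'n) = CARD('n)" by simp
  have "v = (\<Sum>k<CARD('n). (u k \<bullet> v) *\<^sub>R u k)"
    by (rule orthonormal_family_expand[where 'a="real^'n", unfolded dim]) (rule orthonormal_u)
  also have "\<dots> = w + z"
    unfolding w_def z_def
    using sum.atLeastLessThan_concat[of 0 q "CARD('n)" "\<lambda>k. (u k \<bullet> v) *\<^sub>R u k"] card_le
    by (simp add: atLeast0LessThan)
  finally have v: "v = w + z" .
  have "w \<in> span (a ` I)"
    unfolding w_def span_u[symmetric] by (intro span_sum span_scale span_base imageI) simp
  then have "w = (\<Sum>i\<in>I. (- (a i \<bullet> w)) *\<^sub>R dhat a I i)"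
    by (rule span_eq_dhat_sum[OF finite_I inj independent])
  also have "\<dots> = (\<Sum>i\<in>I. (- (a i \<bullet> v)) *\<^sub>R dhat a I i)"
  proof (rule sum.cong)
    fix i assume "i \<in> I"
    then have "a i \<bullet> z = 0" unfolding z_def by (simp add: inner_sum_right inner_a_u)
    then show "(- (a i \<bullet> w)) *\<^sub>R dhat a I i = (- (a i \<bullet> v)) *\<^sub>R dhat a I i"
      using v by (simp add: inner_add_right)
  qed simp
  finally show ?thesis using v unfolding z_def by metis
qed

lemma dhat_eq_scaled_dir: "i \<in> I \<Longrightarrow> dhat a I i = (norm (dhat a I i) / \<alpha>) *\<^sub>R dir a I \<alpha> i"
  using norm_dhat_pos alpha_pos unfolding dir_def by simp

lemma nonpos_dhat_term_bounded_comb: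
  assumes i: "i \<in> I" and "t \<le> 0" "- t \<le> norm (a i) * \<alpha>"
  shows "bounded_nonneg_comb D (max 1 (norm (a i) * norm (dhat a I i))) ((- t) *\<^sub>R dhat a I i)"
proof -
  define \<nu> where "\<nu> = norm (dhat a I i)"
  have "\<nu> > 0" unfolding \<nu>_def using norm_dhat_pos[OF i] .
  have "- t * \<nu> / \<alpha> \<le> norm (a i) * \<alpha> * \<nu> / \<alpha>"
    using assms(3) \<open>\<nu> > 0\<close> alpha_pos by (intro divide_right_mono mult_right_mono) auto
  then have "- t * \<nu> / \<alpha> \<le> max 1 (norm (a i) * \<nu>)"
    using alpha_pos by simp
  then have "bounded_nonneg_comb D (max 1 (norm (a i) * \<nu>)) ((- t * \<nu> / \<alpha>) *\<^sub>R dir a I \<alpha> i)"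
    using \<open>t \<le> 0\<close> \<open>\<nu> > 0\<close> alpha_pos
    by (intro bounded_nonneg_comb_scaleR[OF finite_Dset dir_in_Dset[OF i]])
       (auto simp: divide_nonpos_pos mult_nonpos_nonneg)
  then show ?thesis
    by (subst dhat_eq_scaled_dir[OF i]) (simp add: \<nu>_def)
qed

lemma pos_dhat_term_bounded_comb:
  assumes i: "i \<in> I" and "0 < t" "t \<le> slack i" "t \<le> norm (a i) * \<alpha>"
  shows "bounded_nonneg_comb D (max 1 (norm (a i) * norm (dhat a I i))) ((- t) *\<^sub>R dhat a I i)"
proof -
  define \<nu> where "\<nu> = norm (dhat a I i)"
  define \<beta> where "\<beta> = back_step i"
  have "\<nu> > 0" unfolding \<nu>_def using norm_dhat_pos[OF i] .
  have "\<beta> > 0" unfolding \<beta>_def using assms(2,3) \<open>\<nu> > 0\<close> alpha_pos by (simp add: \<nu>_def)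
  have "t * \<nu> / (\<alpha> * \<beta>) \<le> max 1 (norm (a i) * \<nu>)"
  proof (cases "\<beta> = 1")
    case True
    have "t * \<nu> / \<alpha> \<le> norm (a i) * \<alpha> * \<nu> / \<alpha>"
      using assms(4) \<open>\<nu> > 0\<close> alpha_pos by (intro divide_right_mono mult_right_mono) auto
    then show ?thesis using True alpha_pos by simp
  next
    case False
    then have "\<beta> = slack i * \<nu> / \<alpha>" unfolding \<beta>_def \<nu>_def by (simp add: min_def split: if_splits)
    then have "\<alpha> * \<beta> = slack i * \<nu>"
      using alpha_pos by simp
    then have "t * \<nu> / (\<alpha> * \<beta>) = t / slack i"
      using \<open>\<nu> > 0\<close> by simp
    also have "\<dots> \<le> 1" using assms(2,3) by simp
    finally show ?thesis by simp
  qed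
  then have "bounded_nonneg_comb D (max 1 (norm (a i) * \<nu>))
      ((t * \<nu> / (\<alpha> * \<beta>)) *\<^sub>R (- (\<beta> *\<^sub>R dir a I \<alpha> i)))"
    using assms(2) \<open>\<nu> > 0\<close> \<open>\<beta> > 0\<close> alpha_pos back_dir_in_Dset[OF i]
    by (intro bounded_nonneg_comb_scaleR[OF finite_Dset]) (auto simp: \<beta>_def)
  then show ?thesis
    using \<open>\<beta> > 0\<close> by (subst dhat_eq_scaled_dir[OF i]) (simp add: \<nu>_def)
qed

lemma dhat_term_bounded_comb:
  assumes i: "i \<in> I" and v: "x + v \<in> \<Omega>" "norm v \<le> \<alpha>"
  shows "bounded_nonneg_comb D (max 1 (norm (a i) * norm (dhat a I i))) ((- (a i \<bullet> v)) *\<^sub>R dhat a I i)"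
proof -
  have "\<bar>a i \<bullet> v\<bar> \<le> norm (a i) * \<alpha>"
    using Cauchy_Schwarz_ineq2[of "a i" v] mult_left_mono[OF v(2) norm_ge_zero[of "a i"]] by linarith
  have "a i \<bullet> v \<le> slack i"
    using in_Omega_le[OF v(1) i] by (simp add: inner_add_right)
  show ?thesis
  proof (cases "a i \<bullet> v \<le> 0")
    case True
    then show ?thesis
      using \<open>\<bar>a i \<bullet> v\<bar> \<le> norm (a i) * \<alpha>\<close>
      by (intro nonpos_dhat_term_bounded_comb[OF i]) (simp_all add: abs_le_iff)
  next
    case False
    then show ?thesis
      using \<open>\<bar>a i \<bullet> v\<bar> \<le> norm (a i) * \<alpha>\<close> \<open>a i \<bullet> v \<le> slack i\<close>
      by (intro pos_dhat_term_bounded_comb[OF i]) (simp_all add: abs_le_iff)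
  qed
qed

lemma u_term_bounded_comb:
  assumes k: "k \<in> {q..<CARD('n)}" and "norm v \<le> \<alpha>"
  shows "bounded_nonneg_comb D 1 ((u k \<bullet> v) *\<^sub>R u k)"
proof -
  define g where "g = u k \<bullet> v"
  have "\<bar>g\<bar> \<le> \<alpha>"
    unfolding g_def using Cauchy_Schwarz_ineq2[of "u k" v] norm_u k assms(2) by simp
  show ?thesis
  proof (cases "g \<ge> 0")
    case True
    have "bounded_nonneg_comb D 1 ((g / \<alpha>) *\<^sub>R (\<alpha> *\<^sub>R u k))"
      using True \<open>\<bar>g\<bar> \<le> \<alpha>\<close> alpha_pos
      by (intro bounded_nonneg_comb_scaleR[OF finite_Dset u_in_Dset(1)[OF k]]) auto
    then show ?thesis using alpha_pos unfolding g_def by simp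
  next
    case False
    have "bounded_nonneg_comb D 1 ((- g / \<alpha>) *\<^sub>R (- (\<alpha> *\<^sub>R u k)))"
      using False \<open>\<bar>g\<bar> \<le> \<alpha>\<close> alpha_pos
      by (intro bounded_nonneg_comb_scaleR[OF finite_Dset u_in_Dset(2)[OF k]])
         (auto simp: divide_nonpos_pos le_divide_eq)
    then show ?thesis using alpha_pos unfolding g_def by simp
  qed
qed

lemma Dset_bounded_comb:
  fixes C :: real
  assumes C: "1 \<le> C" "\<And>i. i \<in> I \<Longrightarrow> norm (a i) * norm (dhat a I i) \<le> C"
    and v: "x + v \<in> \<Omega>" "norm v \<le> \<alpha>"
  shows "bounded_nonneg_comb D (CARD('n) * C) v"
proof -
  have "bounded_nonneg_comb D
      ((\<Sum>i\<in>I. max 1 (norm (a i) * norm (dhat a I i))) + (\<Sum>k\<in>{q..<CARD('n)}. 1))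
      ((\<Sum>i\<in>I. (- (a i \<bullet> v)) *\<^sub>R dhat a I i) + (\<Sum>k\<in>{q..<CARD('n)}. (u k \<bullet> v) *\<^sub>R u k))"
    using v by (intro bounded_nonneg_comb_add bounded_nonneg_comb_sum finite_I finite_atLeastLessThan
        dhat_term_bounded_comb u_term_bounded_comb)
  then have "bounded_nonneg_comb D
      ((\<Sum>i\<in>I. max 1 (norm (a i) * norm (dhat a I i))) + (\<Sum>k\<in>{q..<CARD('n)}. 1)) v"
    using dhat_u_decomposition[of v] by simp
  moreover have "(\<Sum>i\<in>I. max 1 (norm (a i) * norm (dhat a I i))) + (\<Sum>k\<in>{q..<CARD('n)}. 1)
      \<le> real CARD('n) * C"
  proof -
    have "(\<Sum>i\<in>I. max 1 (norm (a i) * norm (dhat a I i))) \<le> real q * C"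
      using sum_bounded_above[of I "\<lambda>i. max 1 (norm (a i) * norm (dhat a I i))" C] C by simp
    moreover have "(\<Sum>k\<in>{q..<CARD('n)}. 1) \<le> (real CARD('n) - real q) * C"
      using C(1) card_le by (simp add: of_nat_diff mult_le_cancel_left1)
    ultimately show ?thesis by (simp add: left_diff_distrib)
  qed
  ultimately show ?thesis by (rule bounded_nonneg_comb_mono)
qed

lemma pos_spanning_set_Dset:
  fixes C :: real
  assumes "1 \<le> C" "\<And>i. i \<in> I \<Longrightarrow> norm (a i) * norm (dhat a I i) \<le> C"
  shows "pos_spanning_set \<Omega> x \<alpha> D (CARD('n) * C)"
  using finite_Dset Dset_feasible Dset_bounded_comb[OF assms] by (rule pos_spanning_setI)

end

lemma norm_dhat_bounded:
  fixes a :: "nat \<Rightarrow> real^'n"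
  obtains C where "1 \<le> C" "\<And>J i. J \<subseteq> {..<m} \<Longrightarrow> i \<in> J \<Longrightarrow> norm (a i) * norm (dhat a J i) \<le> C"
proof
  define K where "K J = (\<Sum>i\<in>J. norm (a i) * norm (dhat a J i))" for J
  show "1 \<le> 1 + sum K (Pow {..<m})"
    unfolding K_def by (simp add: sum_nonneg)
  fix J i assume J: "J \<subseteq> {..<m}" and "i \<in> J"
  from J have "finite J" by (rule finite_subset) simp
  then have "norm (a i) * norm (dhat a J i) \<le> K J"
    unfolding K_def using \<open>i \<in> J\<close> by (intro member_le_sum) simp_all
  also have "\<dots> \<le> sum K (Pow {..<m})"
    using J unfolding K_def by (intro member_le_sum) (auto intro: sum_nonneg)
  finally show "norm (a i) * norm (dhat a J i) \<le> 1 + sum K (Pow {..<m})" by simp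
qed

theorem corollary5p9:
  fixes a :: "nat \<Rightarrow> real^'n" and m :: nat
  shows "\<exists>C>0. \<forall>(b :: nat \<Rightarrow> real) (x :: real^'n) (\<alpha> :: real) (u :: nat \<Rightarrow> real^'n).
           x \<in> Omega a b m \<longrightarrow> \<alpha> > 0 \<longrightarrow>
           card (nearly_active a b m x \<alpha>) \<le> CARD('n) \<longrightarrow>
           inj_on a (nearly_active a b m x \<alpha>) \<longrightarrow>
           independent (a ` nearly_active a b m x \<alpha>) \<longrightarrow>
           left_singular_basis a (nearly_active a b m x \<alpha>) u \<longrightarrow>
           (\<exists>\<Lambda>. \<Lambda> \<le> real CARD('n) * C \<and>
                 pos_spanning_set (Omega a b m) x \<alpha> (Dset a b m x \<alpha> u) \<Lambda>)"
proof -
  obtain C where C: "1 \<le> C"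
    and bound: "\<And>J i. J \<subseteq> {..<m} \<Longrightarrow> i \<in> J \<Longrightarrow> norm (a i) * norm (dhat a J i) \<le> C"
    using norm_dhat_bounded by blast
  show ?thesis
  proof (rule exI[of _ C], intro conjI allI impI)
    fix b x \<alpha> u
    assume "x \<in> Omega a b m" "\<alpha> > 0" "card (nearly_active a b m x \<alpha>) \<le> CARD('n)"
      "inj_on a (nearly_active a b m x \<alpha>)" "independent (a ` nearly_active a b m x \<alpha>)"
      "left_singular_basis a (nearly_active a b m x \<alpha>) u"
    then interpret spanning_construction a b m x \<alpha> u
      by unfold_locales
    show "\<exists>\<Lambda>. \<Lambda> \<le> real CARD('n) * C \<and> pos_spanning_set \<Omega> x \<alpha> D \<Lambda>"
      using pos_spanning_set_Dset[OF C bound[OF nearly_active_subset]] by blast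
  qed (use C in simp)
qed

end
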